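(* In the setting described in the context, assume that $D^pf(x)=\mathcal{C}_*$ for all $x\in\mathbb{R}^n$ (for a fixed $\mathcal{C}_*\in\mathbb{R}^{\otimes^p n}_{\mathrm{sym}}$) and that $W_k=W_*$ for all $k$, for a fixed nonsingular $W_*\in\mathbb{R}^{n\times n}$. If the vectors $W_*^{-1}s_0,\dots,W_*^{-1}s_{n-1}$ are pairwise orthogonal, then $\mathcal{C}_n=\mathcal{C}_*$.
   Context: Setting (higher-order secant update): $p\ge 2$; $f:\mathbb{R}^n\to\mathbb{R}$ is $p$ times continuously differentiable, $D^pf(x)\in\mathbb{R}^{\otimes^p n}_{\mathrm{sym}}$ denoting its $p$th derivative viewed as a symmetric multilinear map; $(x_k)_{k\ge0}$ is a sequence in $\mathbb{R}^n$ with steps $s_k = x_{k+1}-x_k \ne 0$; $(W_k)_{k\ge0}$ are nonsingular $n\times n$ matrices; $\widetilde{\mathcal{C}}_k = \int_0^1 D^pf(x_k+ts_k)\,dt$; $\mathcal{C}_0\in\mathbb{R}^{\otimes^p n}_{\mathrm{sym}}$ is arbitrary and $\mathcal{C}_{k+1}$ is the unique minimizer of $\|(\mathcal{C}-\mathcal{C}_k)[W_k]^p\|_F$ over $\mathcal{C}\in\mathbb{R}^{\otimes^p n}_{\mathrm{sym}}$ subject to $\mathcal{C}[s_k]=\widetilde{\mathcal{C}}_k[s_k]$. Notation: a $p$-tensor is a multilinear map $(\mathbb{R}^n)^p\to\mathbb{R}$; $\mathcal{T}[s]$ fixes the first argument to $s$; $(\mathcal{T}[M]^p)[s_1,\dots,s_p]=\mathcal{T}[Ms_1,\dots,Ms_p]$;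 symmetric means invariant under permutation of arguments; $\|\cdot\|_F$ is the Frobenius norm of the array of entries $\mathcal{T}[e_{i_1},\dots,e_{i_p}]$. *)

theory Defs
  imports "HOL-Analysis.Analysis"
begin

text \<open>A p-tensor on R^n (n = CARD('n)) is represented by its array of entries
  T[e_i1,...,e_ip], i.e. a function on index lists; entries at lists of
  length different from p are required to be 0 (see tensor_space).\<close>

type_synonym 'n tensor = "'n list \<Rightarrow> real"

definition tensor_space :: "nat \<Rightarrow> 'n tensor set" where
  "tensor_space p = {T. \<forall>is. length is \<noteq> p \<longrightarrow> T is = 0}"

definition sym_tensor :: "nat \<Rightarrow> ('n::finite) tensor \<Rightarrow> bool" where
  "sym_tensor p T \<longleftrightarrow> T \<in> tensor_space p \<and>
     (\<forall>is js. length is = p \<longrightarrow> mset is = mset js \<longrightarrow> T is = T js)"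

definition tensor_apply :: "('n::finite) tensor \<Rightarrow> real^'n \<Rightarrow> 'n tensor" where
  "tensor_apply T s = (\<lambda>is. \<Sum>i\<in>UNIV. s $ i * T (i # is))"

text \<open>T[M]^p: (T[M]^p)[e_j1,...,e_jp] = T[M e_j1,...,M e_jp].\<close>
definition tensor_transform :: "nat \<Rightarrow> ('n::finite) tensor \<Rightarrow> real^'n^'n \<Rightarrow> 'n tensor" where
  "tensor_transform p T M = (\<lambda>js. if length js = p then
      (\<Sum>is\<in>{is. length is = p}. T is * (\<Prod>l<p. M $ (is ! l) $ (js ! l)))
    else 0)"

definition frob :: "nat \<Rightarrow> ('n::finite) tensor \<Rightarrow> real" where
  "frob p T = sqrt (\<Sum>is\<in>{is. length is = p}. (T is)\<^sup>2)"

fun nderiv :: "nat \<Rightarrow> (real^'n \<Rightarrow> real) \<Rightarrow> real^'n \<Rightarrow> (real^'n) list \<Rightarrow> real" where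
  "nderiv 0 f x vs = f x"
| "nderiv (Suc m) f x vs =
     frechet_derivative (\<lambda>y. nderiv m f y (tl vs)) (at x) (hd vs)"

definition Cp :: "nat \<Rightarrow> (real^'n \<Rightarrow> real) \<Rightarrow> bool" where
  "Cp p f \<longleftrightarrow> (\<forall>m<p. \<forall>vs x. (\<lambda>y. nderiv m f y vs) differentiable (at x))
     \<and> (\<forall>vs. continuous_on UNIV (\<lambda>y. nderiv p f y vs))"

definition Dp :: "nat \<Rightarrow> (real^'n \<Rightarrow> real) \<Rightarrow> real^'n \<Rightarrow> ('n::finite) tensor" where
  "Dp p f x = (\<lambda>is. if length is = p then nderiv p f x (map (\<lambda>i. axis i 1) is) else 0)"

definition Ctilde :: "nat \<Rightarrow> (real^'n \<Rightarrow> real) \<Rightarrow> real^'n \<Rightarrow> real^'n \<Rightarrow> ('n::finite) tensor" where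
  "Ctilde p f xk sk = (\<lambda>is. integral {0..1} (\<lambda>t. Dp p f (xk + t *\<^sub>R sk) is))"

end

theory Submission
  imports Defs
begin

text \<open>
  Put \<open>F\<^sub>k = (C\<^sub>k - C\<^sub>*)[W\<^sub>*]\<^sup>p\<close> and \<open>u\<^sub>k = W\<^sub>*\<^sup>-\<^sup>1 s\<^sub>k\<close>. Since \<open>D\<^sup>pf\<close> is constantly \<open>C\<^sub>*\<close>, the
  secant condition says that \<open>F\<^sub>k\<^sub>+\<^sub>1\<close> is a symmetric tensor annihilated by \<open>u\<^sub>k\<close>, and the update
  picks the one closest to \<open>F\<^sub>k\<close> in the Frobenius norm. That is the orthogonal projection
  \<open>F\<^sub>k[P\<^sub>k]\<^sup>p\<close> with \<open>P\<^sub>k = I - u\<^sub>k u\<^sub>k\<^sup>T/|u\<^sub>k|\<^sup>2\<close>, because \<open>F\<^sub>k[P\<^sub>k]\<^sup>p\<close> is itself feasible and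
  \<open>F \<mapsto> F[P]\<^sup>p\<close> is a self-adjoint idempotent. Hence \<open>F\<^sub>n = F\<^sub>0[P\<^sub>0 \<cdots> P\<^sub>n\<^sub>-\<^sub>1]\<^sup>p\<close>, and the product of
  the projections onto the orthogonal complements of \<open>n\<close> pairwise orthogonal nonzero vectors
  of \<open>\<real>\<^sup>n\<close> vanishes.
\<close>

lemma finite_lists_length_eq_UNIV: "finite {is::('n::finite) list. length is = p}"
  using finite_lists_length_eq[of "UNIV::'n set" p] by simp

lemma sum_lists_length_Suc:
  "(\<Sum>is\<in>{is::('n::finite) list. length is = Suc p}. g is)
     = (\<Sum>i\<in>UNIV. \<Sum>is\<in>{is. length is = p}. g (i # is))"
proof -
  have "{is::'n list. length is = Suc p} = (\<lambda>(i, is). i # is) ` (UNIV \<times> {is. length is = p})"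
    by (auto simp: length_Suc_conv image_iff)
  moreover have "inj_on (\<lambda>(i::'n, is). i # is) (UNIV \<times> {is. length is = p})"
    by (auto simp: inj_on_def)
  ultimately show ?thesis
    by (simp add: sum.reindex sum.cartesian_product split_def)
qed

lemma tensor_transform_length_neq: "length js \<noteq> p \<Longrightarrow> tensor_transform p T M js = 0"
  by (simp add: tensor_transform_def)

lemma tensor_transform_in_tensor_space: "tensor_transform p T M \<in> tensor_space p"
  by (simp add: tensor_space_def tensor_transform_length_neq)

lemma tensor_transform_Nil: "tensor_transform 0 T M [] = T []"
  by (simp add: tensor_transform_def)

lemma tensor_transform_Cons:
  "tensor_transform (Suc p) T M (j # js)
     = (\<Sum>i\<in>UNIV. M $ i $ j * tensor_transform p (\<lambda>is. T (i # is)) M js)"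
proof (cases "length js = p")
  case True
  have "tensor_transform (Suc p) T M (j # js)
     = (\<Sum>i\<in>UNIV. \<Sum>is\<in>{is. length is = p}.
          T (i # is) * (\<Prod>l<Suc p. M $ ((i # is) ! l) $ ((j # js) ! l)))"
    using True by (simp add: tensor_transform_def sum_lists_length_Suc)
  also have "\<dots> = (\<Sum>i\<in>UNIV. \<Sum>is\<in>{is. length is = p}.
          M $ i $ j * (T (i # is) * (\<Prod>l<p. M $ (is ! l) $ (js ! l))))"
    by (simp only: prod.lessThan_Suc_shift nth_Cons_0 nth_Cons_Suc) (simp add: algebra_simps)
  also have "\<dots> = (\<Sum>i\<in>UNIV. M $ i $ j * tensor_transform p (\<lambda>is. T (i # is)) M js)"
    using True by (simp add: tensor_transform_def sum_distrib_left)
  finally show ?thesis .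
qed (simp add: tensor_transform_def)

lemma tensor_transform_sum:
  "tensor_transform p (\<lambda>is. \<Sum>k\<in>K. c k * X k is) M js
     = (\<Sum>k\<in>K. c k * tensor_transform p (X k) M js)"
  by (simp add: tensor_transform_def sum_distrib_left sum_distrib_right mult_ac sum.swap[of _ K])

lemma tensor_transform_diff:
  "tensor_transform p (A - B) M = tensor_transform p A M - tensor_transform p B M"
  by (simp add: tensor_transform_def fun_eq_iff sum_subtractf left_diff_distrib)

lemma tensor_transform_0: "tensor_transform p (\<lambda>is. 0) M = (\<lambda>js. 0)"
  by (simp add: tensor_transform_def fun_eq_iff)

lemma tensor_transform_zero_matrix: "tensor_transform (Suc p) T 0 = (\<lambda>js. 0)"
proof
  fix js
  show "tensor_transform (Suc p) T 0 js = 0"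
    by (cases js) (simp_all add: tensor_transform_length_neq tensor_transform_Cons)
qed

lemma tensor_transform_mult:
  "tensor_transform p (tensor_transform p T A) B = tensor_transform p T (A ** B)"
proof (induction p arbitrary: T)
  case 0
  show ?case
  proof
    fix js
    show "tensor_transform 0 (tensor_transform 0 T A) B js = tensor_transform 0 T (A ** B) js"
      by (cases js) (simp_all add: tensor_transform_Nil tensor_transform_length_neq)
  qed
next
  case (Suc p)
  show ?case
  proof
    fix js
    show "tensor_transform (Suc p) (tensor_transform (Suc p) T A) B js
        = tensor_transform (Suc p) T (A ** B) js"
    proof (cases js)
      case (Cons j js')
      let ?T = "\<lambda>k. tensor_transform p (\<lambda>is. T (k # is)) (A ** B) js'"
      have "tensor_transform (Suc p) (tensor_transform (Suc p) T A) B js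
          = (\<Sum>i\<in>UNIV. B $ i $ j * (\<Sum>k\<in>UNIV. A $ k $ i * ?T k))"
        by (simp add: Cons tensor_transform_Cons tensor_transform_sum Suc.IH)
      also have "\<dots> = (\<Sum>k\<in>UNIV. (\<Sum>i\<in>UNIV. A $ k $ i * B $ i $ j) * ?T k)"
        unfolding sum_distrib_left sum_distrib_right by (subst sum.swap) (simp add: mult_ac)
      finally show ?thesis
        by (simp add: Cons tensor_transform_Cons matrix_matrix_mult_def)
    qed (simp add: tensor_transform_length_neq)
  qed
qed

lemma tensor_transform_mat_1:
  assumes "T \<in> tensor_space p" shows "tensor_transform p T (mat 1) = T"
proof
  fix js
  show "tensor_transform p T (mat 1) js = T js"
  proof (cases "length js = p")
    case True
    then show ?thesis
    proof (induction js arbitrary: p T)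
      case (Cons j js)
      then obtain q where q: "p = Suc q" "length js = q" by auto
      have "tensor_transform p T (mat 1) (j # js) = (\<Sum>i\<in>UNIV. if i = j then T (i # js) else 0)"
        unfolding q tensor_transform_Cons Cons.IH[OF q(2)] by (rule sum.cong) (auto simp: mat_def)
      then show ?case by simp
    qed (simp add: tensor_transform_Nil)
  qed (use assms in \<open>simp add: tensor_space_def tensor_transform_length_neq\<close>)
qed

lemma invertible_matrix_inv:
  assumes "invertible A"
  shows "A ** matrix_inv A = mat 1" and "matrix_inv A ** A = mat 1"
  using assms unfolding invertible_def matrix_inv_def by (metis (mono_tags, lifting) someI_ex)+

lemma tensor_transform_invertible_eq_0:
  assumes "T \<in> tensor_space p" "invertible W" "tensor_transform p T W = (\<lambda>js. 0)"
  shows "T = (\<lambda>js. 0)"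
proof -
  have "T = tensor_transform p (tensor_transform p T W) (matrix_inv W)"
    by (simp add: tensor_transform_mult invertible_matrix_inv[OF assms(2)]
        tensor_transform_mat_1[OF assms(1)])
  then show ?thesis
    by (simp add: assms(3) tensor_transform_0)
qed

definition frob_inner :: "nat \<Rightarrow> ('n::finite) tensor \<Rightarrow> 'n tensor \<Rightarrow> real" where
  "frob_inner p A B = (\<Sum>is\<in>{is. length is = p}. A is * B is)"

lemma frob_inner_tensor_transform:
  "frob_inner p G (tensor_transform p T M) = frob_inner p (tensor_transform p G (transpose M)) T"
proof -
  have "frob_inner p G (tensor_transform p T M)
      = (\<Sum>js\<in>{js. length js = p}. \<Sum>is\<in>{is. length is = p}.
           G js * (\<Prod>l<p. M $ (is ! l) $ (js ! l)) * T is)"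
    by (simp add: frob_inner_def tensor_transform_def sum_distrib_left mult_ac)
  also have "\<dots> = (\<Sum>is\<in>{is. length is = p}. \<Sum>js\<in>{js. length js = p}.
           G js * (\<Prod>l<p. M $ (is ! l) $ (js ! l)) * T is)"
    by (rule sum.swap)
  also have "\<dots> = frob_inner p (tensor_transform p G (transpose M)) T"
    by (simp add: frob_inner_def tensor_transform_def sum_distrib_right transpose_def)
  finally show ?thesis .
qed

lemma tensor_apply_tensor_transform:
  "tensor_apply (tensor_transform (Suc p) T M) u = tensor_transform p (tensor_apply T (M *v u)) M"
proof
  fix ks
  have "tensor_apply (tensor_transform (Suc p) T M) u ks
      = (\<Sum>j\<in>UNIV. u $ j * (\<Sum>i\<in>UNIV. M $ i $ j * tensor_transform p (\<lambda>is. T (i # is)) M ks))"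
    by (simp add: tensor_apply_def tensor_transform_Cons)
  also have "\<dots> = (\<Sum>i\<in>UNIV. (\<Sum>j\<in>UNIV. M $ i $ j * u $ j) * tensor_transform p (\<lambda>is. T (i # is)) M ks)"
    unfolding sum_distrib_left sum_distrib_right by (subst sum.swap) (simp add: mult_ac)
  also have "\<dots> = tensor_transform p (tensor_apply T (M *v u)) M ks"
    by (simp add: tensor_apply_def tensor_transform_sum matrix_vector_mult_def)
  finally show "tensor_apply (tensor_transform (Suc p) T M) u ks
      = tensor_transform p (tensor_apply T (M *v u)) M ks" .
qed

lemma tensor_apply_diff: "tensor_apply (A - B) s = tensor_apply A s - tensor_apply B s"
  by (simp add: tensor_apply_def fun_eq_iff right_diff_distrib sum_subtractf)

lemma tensor_apply_add:
  "tensor_apply (\<lambda>is. A is + B is) s = (\<lambda>is. tensor_apply A s is + tensor_apply B s is)"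
  by (simp add: tensor_apply_def fun_eq_iff distrib_left sum.distrib)

lemma tensor_apply_zero_vector: "tensor_apply T 0 = (\<lambda>is. 0)"
  by (simp add: tensor_apply_def fun_eq_iff)

lemma sym_tensor_diff: "sym_tensor p A \<Longrightarrow> sym_tensor p B \<Longrightarrow> sym_tensor p (A - B)"
  unfolding sym_tensor_def tensor_space_def by auto

lemma sym_tensor_add: "sym_tensor p A \<Longrightarrow> sym_tensor p B \<Longrightarrow> sym_tensor p (\<lambda>is. A is + B is)"
  unfolding sym_tensor_def tensor_space_def by auto

lemma sym_tensor_Cons:
  assumes "sym_tensor (Suc p) T" shows "sym_tensor p (\<lambda>is. T (i # is))"
  using assms unfolding sym_tensor_def tensor_space_def by auto

lemma sym_tensor_swap: "sym_tensor (Suc (Suc p)) T \<Longrightarrow> T (i # k # is) = T (k # i # is)"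
  unfolding sym_tensor_def tensor_space_def
  by (cases "length is = p") (auto simp: add_mset_commute)

lemma sym_tensor_perm_eq:
  assumes "sym_tensor p T" "\<sigma> permutes {..<p}" "length is = p"
  shows "T (permute_list \<sigma> is) = T is"
proof -
  have "mset (permute_list \<sigma> is) = mset is"
    using assms(2,3) by (simp add: mset_permute_list)
  moreover have "length (permute_list \<sigma> is) = p"
    using assms(3) by simp
  ultimately show ?thesis
    using assms(1) unfolding sym_tensor_def by blast
qed

lemma sym_tensor_tensor_transform:
  assumes S: "sym_tensor p T" shows "sym_tensor p (tensor_transform p T M)"
  unfolding sym_tensor_def
proof (intro conjI allI impI tensor_transform_in_tensor_space)
  fix js js' :: "'a list" assume L: "length js = p" and E: "mset js = mset js'"
  obtain \<sigma> where \<sigma>: "\<sigma> permutes {..<p}" "permute_list \<sigma> js' = js"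
    using mset_eq_permutation[OF E] L E by (metis mset_eq_length)
  have L': "length js' = p" using L E by (metis mset_eq_length)
  have bij: "bij_betw (permute_list \<sigma>) {is::'a list. length is = p} {is. length is = p}"
    by (rule bij_betw_byWitness[where f'="permute_list (inv \<sigma>)"])
       (use \<sigma>(1) permutes_inv[OF \<sigma>(1)] permutes_inv_o[OF \<sigma>(1)]
        in \<open>auto simp: permute_list_compose[symmetric]\<close>)
  let ?m = "\<lambda>is ks. \<Prod>l<p. M $ (is ! l) $ (ks ! l)"
  have "tensor_transform p T M js = (\<Sum>is\<in>{is. length is = p}. T is * ?m is js)"
    using L by (simp add: tensor_transform_def)
  also have "\<dots> = (\<Sum>is\<in>{is. length is = p}. T (permute_list \<sigma> is) * ?m (permute_list \<sigma> is) js)"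
    by (rule sum.reindex_bij_betw[OF bij, symmetric])
  also have "\<dots> = (\<Sum>is\<in>{is. length is = p}. T is * (\<Prod>l<p. M $ (is ! \<sigma> l) $ (js' ! \<sigma> l)))"
  proof (rule sum.cong[OF refl])
    fix ks :: "'a list" assume "ks \<in> {is. length is = p}"
    then have "length ks = p" by simp
    then show "T (permute_list \<sigma> ks) * ?m (permute_list \<sigma> ks) js
        = T ks * (\<Prod>l<p. M $ (ks ! \<sigma> l) $ (js' ! \<sigma> l))"
      using sym_tensor_perm_eq[OF S \<sigma>(1)] L' \<sigma>
      by (auto simp: permute_list_nth intro!: prod.cong)
  qed
  also have "\<dots> = (\<Sum>is\<in>{is. length is = p}. T is * ?m is js')"
    by (intro sum.cong refl arg_cong[where f="\<lambda>x. _ * x"])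
       (rule prod.reindex_bij_betw[OF permutes_imp_bij[OF \<sigma>(1)]])
  also have "\<dots> = tensor_transform p T M js'"
    using L' by (simp add: tensor_transform_def)
  finally show "tensor_transform p T M js = tensor_transform p T M js'" .
qed

text \<open>\<open>I - u u\<^sup>T/|u|\<^sup>2\<close>; for \<open>u = 0\<close> it is the identity, as division by zero yields zero.\<close>

definition perp_proj :: "real^'n \<Rightarrow> real^'n^'n" where
  "perp_proj u = mat 1 - (\<chi> i j. u $ i * u $ j / (u \<bullet> u))"

lemma transpose_perp_proj: "transpose (perp_proj u) = perp_proj u"
  by (simp add: perp_proj_def transpose_def vec_eq_iff mat_def mult.commute)

lemma perp_proj_mult_vec: "perp_proj u *v x = x - ((u \<bullet> x) / (u \<bullet> u)) *\<^sub>R u"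
  by (simp add: perp_proj_def matrix_vector_mult_diff_rdistrib)
     (simp add: matrix_vector_mult_def vec_eq_iff inner_vec_def sum_divide_distrib
       sum_distrib_left mult_ac)

lemma perp_proj_mult_vec_self: "perp_proj u *v u = 0"
  by (cases "u = 0") (simp_all add: perp_proj_mult_vec)

lemma perp_proj_idem: "perp_proj u ** perp_proj u = perp_proj u"
  unfolding matrix_eq
  by (cases "u = 0")
     (simp_all add: matrix_vector_mul_assoc[symmetric] perp_proj_mult_vec inner_diff_right field_simps)

lemma tensor_apply_Cons_eq_0:
  assumes "sym_tensor (Suc p) T" and "tensor_apply T u = (\<lambda>is. 0)"
  shows "tensor_apply (\<lambda>is. T (i # is)) u = (\<lambda>is. 0)"
proof (cases p)
  case (Suc q)
  have "tensor_apply (\<lambda>is. T (i # is)) u is = tensor_apply T u (i # is)" for "is"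
    using sym_tensor_swap[of q T] assms(1) by (simp add: Suc tensor_apply_def)
  then show ?thesis
    using assms(2) by (simp add: fun_eq_iff)
qed (use assms(1) in \<open>auto simp: tensor_apply_def sym_tensor_def tensor_space_def\<close>)

lemma sym_tensor_fixed_by_perp_proj:
  assumes "sym_tensor p T" and "tensor_apply T u = (\<lambda>is. 0)"
  shows "tensor_transform p T (perp_proj u) = T"
  using assms
proof (induction p arbitrary: T)
  case 0
  show ?case
  proof
    fix js
    show "tensor_transform 0 T (perp_proj u) js = T js"
      using "0.prems"(1) by (cases js) (auto simp: tensor_transform_Nil sym_tensor_def
        tensor_space_def tensor_transform_length_neq)
  qed
next
  case (Suc p)
  have sub_fixed: "tensor_transform p (\<lambda>is. T (i # is)) (perp_proj u) = (\<lambda>is. T (i # is))" for i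
    using Suc.prems by (intro Suc.IH sym_tensor_Cons tensor_apply_Cons_eq_0)
  have P_sym: "perp_proj u $ i $ j = perp_proj u $ j $ i" for i j
    using arg_cong[OF transpose_perp_proj, of "\<lambda>M. M $ j $ i"] by (simp add: transpose_def)
  show ?case
  proof
    fix js
    show "tensor_transform (Suc p) T (perp_proj u) js = T js"
    proof (cases js)
      case (Cons j js')
      let ?y = "\<chi> i. T (i # js')"
      have "u \<bullet> ?y = 0"
        using fun_cong[OF Suc.prems(2), of js'] by (simp add: inner_vec_def tensor_apply_def)
      then have "(perp_proj u *v ?y) $ j = T js"
        by (simp add: perp_proj_mult_vec Cons)
      moreover have "tensor_transform (Suc p) T (perp_proj u) js = (perp_proj u *v ?y) $ j"
        by (simp add: Cons tensor_transform_Cons sub_fixed matrix_vector_mult_def P_sym)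
      ultimately show ?thesis
        by simp
    qed (use Suc.prems(1) in \<open>auto simp: sym_tensor_def tensor_space_def tensor_transform_length_neq\<close>)
  qed
qed

lemma frob_le_iff: "frob p A \<le> frob p B
    \<longleftrightarrow> (\<Sum>is\<in>{is. length is = p}. (A is)\<^sup>2) \<le> (\<Sum>is\<in>{is. length is = p}. (B is)\<^sup>2)"
  by (simp add: frob_def)

text \<open>\<open>G - F[P]\<^sup>p\<close> is \<open>P\<close>-fixed, hence orthogonal to \<open>F[P]\<^sup>p - F\<close>; Pythagoras does the rest.\<close>

lemma tensor_transform_best_approx:
  fixes F G :: "('n::finite) tensor"
  assumes P_sym: "transpose P = P" and P_idem: "P ** P = P"
    and G_fixed: "tensor_transform p G P = G"
    and le: "frob p (G - F) \<le> frob p (tensor_transform p F P - F)"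
  shows "G = tensor_transform p F P"
proof -
  let ?b = "tensor_transform p F P"
  define H where "H = G - ?b"
  have H_fixed: "tensor_transform p H P = H"
    unfolding H_def tensor_transform_diff tensor_transform_mult P_idem G_fixed ..
  have "frob_inner p H ?b = frob_inner p H F"
    using frob_inner_tensor_transform[of p H F P] by (simp add: P_sym H_fixed)
  then have orth: "frob_inner p H (?b - F) = 0"
    by (simp add: frob_inner_def right_diff_distrib sum_subtractf)
  have pointwise: "((G - F) is)\<^sup>2 = (H is)\<^sup>2 + 2 * (H is * (?b - F) is) + ((?b - F) is)\<^sup>2"
    for "is" by (simp add: H_def power2_eq_square algebra_simps)
  have "(\<Sum>is\<in>{is. length is = p}. ((G - F) is)\<^sup>2)
      = (\<Sum>is\<in>{is. length is = p}. (H is)\<^sup>2) + 2 * frob_inner p H (?b - F)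
        + (\<Sum>is\<in>{is. length is = p}. ((?b - F) is)\<^sup>2)"
    by (simp only: pointwise sum.distrib frob_inner_def sum_distrib_left)
  with le orth have "(\<Sum>is\<in>{is::'n list. length is = p}. (H is)\<^sup>2) = 0"
    by (simp add: frob_le_iff) (meson order_antisym sum_nonneg zero_le_power2)
  then have "H is = 0" if "length is = p" for "is"
    using that by (subst (asm) sum_nonneg_eq_0_iff[OF finite_lists_length_eq_UNIV]) auto
  moreover have "H is = 0" if "length is \<noteq> p" for "is"
    using that fun_cong[OF H_fixed, of "is"] by (simp add: tensor_transform_length_neq)
  ultimately show ?thesis
    unfolding H_def by (metis eq_iff_diff_eq_0 ext fun_diff_def)
qed

lemma secant_solution_fixed_by_perp_proj:
  assumes p: "p = Suc q" and sym: "sym_tensor p C" "sym_tensor p Cs"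
    and Wu: "W *v u = s" and secant: "tensor_apply C s = tensor_apply Cs s"
  shows "tensor_transform p (tensor_transform p (C - Cs) W) (perp_proj u)
       = tensor_transform p (C - Cs) W"
proof (intro sym_tensor_fixed_by_perp_proj sym_tensor_tensor_transform sym_tensor_diff sym)
  have "tensor_apply (tensor_transform p (C - Cs) W) u
      = tensor_transform q (tensor_apply (C - Cs) s) W"
    by (simp add: p tensor_apply_tensor_transform Wu)
  also have "\<dots> = (\<lambda>is. 0)"
    unfolding tensor_apply_diff secant by (simp add: fun_diff_def tensor_transform_0)
  finally show "tensor_apply (tensor_transform p (C - Cs) W) u = (\<lambda>is. 0)" .
qed

lemma min_secant_update_eq_perp_proj:
  fixes Ck Ck' Cs :: "('n::finite) tensor"
  assumes p: "p = Suc q"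
    and sym: "sym_tensor p Ck" "sym_tensor p Ck'" "sym_tensor p Cs"
    and W: "invertible W"
    and secant: "tensor_apply Ck' s = tensor_apply Cs s"
    and minimal: "\<And>D. sym_tensor p D \<Longrightarrow> tensor_apply D s = tensor_apply Cs s \<Longrightarrow>
       frob p (tensor_transform p (Ck' - Ck) W) \<le> frob p (tensor_transform p (D - Ck) W)"
  shows "tensor_transform p (Ck' - Cs) W
       = tensor_transform p (tensor_transform p (Ck - Cs) W) (perp_proj (matrix_inv W *v s))"
proof -
  define V where "V = matrix_inv W"
  define P where "P = perp_proj (V *v s)"
  define E where "E = Ck - Cs"
  define F where "F = tensor_transform p E W"
  define F' where "F' = tensor_transform p (Ck' - Cs) W"
  have WV: "W ** V = mat 1" and VW: "V ** W = mat 1"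
    using invertible_matrix_inv[OF W] by (simp_all add: V_def)
  have F'_fixed: "tensor_transform p F' P = F'"
    unfolding F'_def P_def
    by (rule secant_solution_fixed_by_perp_proj[OF p sym(2,3) _ secant])
       (simp add: matrix_vector_mul_assoc WV)
  \<comment> \<open>The competitor \<open>D\<close> is feasible and its distance to \<open>Ck\<close> in \<open>W\<close>-coordinates is that of
    the projection \<open>F[P]\<^sup>p\<close> to \<open>F\<close>.\<close>
  define M where "M = W ** P ** V"
  define D where "D = (\<lambda>is. Cs is + tensor_transform p E M is)"
  have "M *v s = 0"
    by (simp add: M_def P_def matrix_vector_mul_assoc[symmetric] perp_proj_mult_vec_self)
  then have D_secant: "tensor_apply D s = tensor_apply Cs s"
    by (simp add: D_def tensor_apply_add p tensor_apply_tensor_transform tensor_apply_zero_vector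
        tensor_transform_0)
  have D_sym: "sym_tensor p D"
    unfolding D_def E_def by (intro sym_tensor_add sym_tensor_tensor_transform sym_tensor_diff sym)
  have "D - Ck = tensor_transform p E M - E"
    by (simp add: D_def E_def fun_eq_iff)
  then have "tensor_transform p (D - Ck) W = tensor_transform p F P - F"
    by (simp add: tensor_transform_diff tensor_transform_mult F_def M_def
        matrix_mul_assoc[symmetric] VW)
  moreover have "Ck' - Ck = (Ck' - Cs) - E"
    by (simp add: E_def fun_eq_iff)
  then have "tensor_transform p (Ck' - Ck) W = F' - F"
    by (simp only: F'_def F_def tensor_transform_diff)
  ultimately have "frob p (F' - F) \<le> frob p (tensor_transform p F P - F)"
    using minimal[OF D_sym D_secant] by simp
  then have "F' = tensor_transform p F P"
    unfolding P_def
    by (rule tensor_transform_best_approx[OF transpose_perp_proj perp_proj_idem F'_fixed[unfolded P_def]])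
  then show ?thesis
    by (simp add: F'_def F_def E_def P_def V_def)
qed

fun perp_proj_prod :: "(nat \<Rightarrow> real^'n) \<Rightarrow> nat \<Rightarrow> real^'n^'n" where
  "perp_proj_prod u 0 = mat 1"
| "perp_proj_prod u (Suc k) = perp_proj_prod u k ** perp_proj (u k)"

lemma perp_proj_prod_mult_vec:
  assumes "\<And>i j. i < k \<Longrightarrow> j < k \<Longrightarrow> i \<noteq> j \<Longrightarrow> u i \<bullet> u j = 0"
  shows "perp_proj_prod u k *v y = y - (\<Sum>i<k. ((u i \<bullet> y) / (u i \<bullet> u i)) *\<^sub>R u i)"
  using assms
proof (induction k arbitrary: y)
  case (Suc k)
  have "u i \<bullet> u j = 0" if "i < k" "j < k" "i \<noteq> j" for i j
    using Suc.prems that by simp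
  note IH = Suc.IH[OF this]
  have "(\<Sum>i<k. ((u i \<bullet> u k) / (u i \<bullet> u i)) *\<^sub>R u i) = 0"
    by (intro sum.neutral ballI) (simp add: Suc.prems)
  then have fixed: "perp_proj_prod u k *v u k = u k"
    using IH[of "u k"] by simp
  have "perp_proj_prod u (Suc k) *v y
      = perp_proj_prod u k *v (y - ((u k \<bullet> y) / (u k \<bullet> u k)) *\<^sub>R u k)"
    by (simp add: matrix_vector_mul_assoc[symmetric] perp_proj_mult_vec)
  also have "\<dots> = perp_proj_prod u k *v y - ((u k \<bullet> y) / (u k \<bullet> u k)) *\<^sub>R u k"
    by (simp only: matrix_vector_mult_diff_distrib matrix_vector_mult_scaleR fixed)
  finally show ?case
    by (simp add: IH)
qed simp

lemma tensor_transform_perp_proj_prod: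
  assumes "F 0 \<in> tensor_space p"
    and "\<And>k. F (Suc k) = tensor_transform p (F k) (perp_proj (u k))"
  shows "F k = tensor_transform p (F 0) (perp_proj_prod u k)"
proof (induction k)
  case 0
  show ?case
    by (simp add: tensor_transform_mat_1[OF assms(1)])
next
  case (Suc k)
  show ?case
    by (simp add: assms(2) Suc.IH tensor_transform_mult)
qed

lemma orthogonal_to_orthogonal_basis_eq_0:
  fixes u :: "nat \<Rightarrow> real^'n"
  assumes nz: "\<And>i. i < CARD('n) \<Longrightarrow> u i \<noteq> 0"
    and orth: "\<And>i j. i < CARD('n) \<Longrightarrow> j < CARD('n) \<Longrightarrow> i \<noteq> j \<Longrightarrow> u i \<bullet> u j = 0"
    and z: "\<And>i. i < CARD('n) \<Longrightarrow> u i \<bullet> z = 0"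
  shows "z = 0"
proof -
  let ?S = "u ` {..<CARD('n)}"
  have "inj_on u {..<CARD('n)}"
  proof (rule inj_onI, rule ccontr)
    fix i j assume "i \<in> {..<CARD('n)}" "j \<in> {..<CARD('n)}" "u i = u j" "i \<noteq> j"
    then have "u i \<bullet> u i = 0" using orth[of i j] by simp
    then show False using nz \<open>i \<in> {..<CARD('n)}\<close> by simp
  qed
  then have "card ?S = CARD('n)"
    by (simp add: card_image)
  moreover have "independent ?S"
  proof (rule pairwise_orthogonal_independent)
    show "pairwise orthogonal ?S"
      unfolding pairwise_def orthogonal_def using orth by blast
    show "0 \<notin> ?S"
      using nz by (metis imageE lessThan_iff)
  qed
  ultimately have "UNIV \<subseteq> span ?S"
    using card_ge_dim_independent[of ?S UNIV] by simp
  then have "z \<in> span ?S"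
    by blast
  moreover have "orthogonal z v" if "v \<in> ?S" for v
    using that z by (auto simp: orthogonal_def inner_commute)
  ultimately have "orthogonal z z"
    by (rule orthogonal_to_span)
  then show ?thesis
    by (simp add: orthogonal_self)
qed

lemma perp_proj_prod_orthogonal_basis:
  fixes u :: "nat \<Rightarrow> real^'n"
  assumes nz: "\<And>i. i < CARD('n) \<Longrightarrow> u i \<noteq> 0"
    and orth: "\<And>i j. i < CARD('n) \<Longrightarrow> j < CARD('n) \<Longrightarrow> i \<noteq> j \<Longrightarrow> u i \<bullet> u j = 0"
  shows "perp_proj_prod u CARD('n) = 0"
  unfolding matrix_eq
proof
  fix y :: "real^'n"
  let ?z = "perp_proj_prod u CARD('n) *v y"
  have "u j \<bullet> ?z = 0" if j: "j < CARD('n)" for j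
  proof -
    have "(\<Sum>i<CARD('n). ((u i \<bullet> y) / (u i \<bullet> u i)) * (u j \<bullet> u i))
        = (u j \<bullet> y) / (u j \<bullet> u j) * (u j \<bullet> u j)"
      using j orth by (subst sum.remove[of _ j]) (auto intro!: sum.neutral)
    then show ?thesis
      using nz[OF j] by (simp add: perp_proj_prod_mult_vec orth inner_diff_right inner_sum_right
          inner_commute)
  qed
  then show "?z = 0 *v y"
    by (simp add: orthogonal_to_orthogonal_basis_eq_0[OF nz orth])
qed

theorem mainTheorem4:
  fixes p :: nat
    and f :: "real^'n \<Rightarrow> real"
    and x :: "nat \<Rightarrow> real^'n"
    and W :: "nat \<Rightarrow> real^'n^'n"
    and Wstar :: "real^'n^'n"
    and C :: "nat \<Rightarrow> ('n::finite) tensor"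
    and Cstar :: "'n tensor"
  assumes p: "p \<ge> 2"
    and f_Cp: "Cp p f"
    and steps: "\<And>k. x (Suc k) - x k \<noteq> 0"
    and W_inv: "\<And>k. invertible (W k)"
    and C0: "sym_tensor p (C 0)"
    and C_update: "\<And>k. sym_tensor p (C (Suc k))
        \<and> tensor_apply (C (Suc k)) (x (Suc k) - x k)
            = tensor_apply (Ctilde p f (x k) (x (Suc k) - x k)) (x (Suc k) - x k)
        \<and> (\<forall>D. sym_tensor p D
              \<and> tensor_apply D (x (Suc k) - x k)
                  = tensor_apply (Ctilde p f (x k) (x (Suc k) - x k)) (x (Suc k) - x k)
              \<longrightarrow> frob p (tensor_transform p (C (Suc k) - C k) (W k))
                  \<le> frob p (tensor_transform p (D - C k) (W k)))"
    and Cstar: "sym_tensor p Cstar"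
    and Dp_const: "\<And>y. Dp p f y = Cstar"
    and Wstar: "invertible Wstar"
    and W_const: "\<And>k. W k = Wstar"
    and orth: "\<And>i j. i < CARD('n) \<Longrightarrow> j < CARD('n) \<Longrightarrow> i \<noteq> j \<Longrightarrow>
        (matrix_inv Wstar *v (x (Suc i) - x i)) \<bullet> (matrix_inv Wstar *v (x (Suc j) - x j)) = 0"
  shows "C (CARD('n)) = Cstar"
proof -
  obtain q where q: "p = Suc q"
    using p by (cases p) auto
  define s where "s k = x (Suc k) - x k" for k
  define u where "u k = matrix_inv Wstar *v s k" for k
  define F where "F k = tensor_transform p (C k - Cstar) Wstar" for k
  have C_sym: "sym_tensor p (C k)" for k
    by (cases k) (use C0 C_update in auto)
  have Ctilde_eq: "Ctilde p f y v = Cstar" for y v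
    by (simp add: Ctilde_def Dp_const)
  have F_Suc: "F (Suc k) = tensor_transform p (F k) (perp_proj (u k))" for k
    unfolding F_def u_def
    by (rule min_secant_update_eq_perp_proj[OF q C_sym C_sym Cstar Wstar])
       (use C_update[of k] in \<open>simp_all add: Ctilde_eq s_def W_const\<close>)
  have "F 0 \<in> tensor_space p"
    by (simp add: F_def tensor_transform_in_tensor_space)
  note F_prod = tensor_transform_perp_proj_prod[of F p u, OF this F_Suc]
  have Wu: "Wstar *v u k = s k" for k
    by (simp add: u_def matrix_vector_mul_assoc invertible_matrix_inv[OF Wstar])
  have "u k \<noteq> 0" for k
    using Wu[of k] steps[of k] by (auto simp: s_def)
  then have "perp_proj_prod u CARD('n) = 0"
    using orth by (intro perp_proj_prod_orthogonal_basis) (auto simp: u_def s_def)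
  then have "tensor_transform p (C CARD('n) - Cstar) Wstar = (\<lambda>js. 0)"
    using F_prod[of "CARD('n)"] by (simp add: F_def q tensor_transform_zero_matrix)
  moreover have "C CARD('n) - Cstar \<in> tensor_space p"
    using sym_tensor_diff[OF C_sym Cstar] by (simp add: sym_tensor_def)
  ultimately have "C CARD('n) - Cstar = (\<lambda>js. 0)"
    using tensor_transform_invertible_eq_0[OF _ Wstar] by blast
  then show ?thesis
    by (simp add: fun_eq_iff)
qed

end
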